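(* Let $\Phi\subset QSymm$ be a set of homogeneous elements that is a free polynomial basis of $QSymm$ over $\mathbb{Z}$ (i.e. $QSymm=\mathbb{Z}[\Phi]$ freely). Fix $\varphi\in\Phi$ of weight $n$, let $\chi:QSymm\to\mathbb{Z}$ be the ring homomorphism with $\chi(\varphi)=1$ and $\chi(\varphi')=0$ for $\varphi'\in\Phi\setminus\{\varphi\}$, and put $d_i=\sum_{\mathrm{wt}(\alpha)=i}\chi(M_\alpha)Z_\alpha\in NSymm$. Then $d_i=0$ whenever $n\nmid i$, and $d_0=1,d_n,d_{2n},d_{3n},\dots$ is a divided power sequence in $NSymm$ with $d_{kn}$ homogeneous of weight $kn$. Consequently there is a unique Hopf algebra endomorphism $\mathbf{f}_\varphi$ of $NSymm$ with $\mathbf{f}_\varphi(Z_k)=d_{kn}$ for all $k\ge1$. *)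

theory Defs
  imports Main "HOL-Library.Multiset" "HOL-Library.Function_Algebras"
begin

text \<open>Compositions are lists of positive naturals; weight = sum_list.
  Both QSymm and NSymm are realised as the free Z-module on compositions:
  an element is a finitely supported coefficient function (nat list => int)
  supported on compositions.  In QSymm the coefficient at alpha is that of the
  monomial quasisymmetric function M_alpha; in NSymm it is that of
  Z_alpha = Z_a1 ... Z_ak.\<close>

definition is_comp :: "nat list \<Rightarrow> bool" where
  "is_comp \<alpha> \<longleftrightarrow> (\<forall>a\<in>set \<alpha>. 0 < a)"

definition supp :: "('a \<Rightarrow> int) \<Rightarrow> 'a set" where
  "supp f = {x. f x \<noteq> 0}"

definition zcomp :: "(nat list \<Rightarrow> int) set" where
  "zcomp = {f. finite (supp f) \<and> (\<forall>\<alpha>\<in>supp f. is_comp \<alpha>)}"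

definition bas :: "nat list \<Rightarrow> nat list \<Rightarrow> int" where
  "bas \<alpha> = (\<lambda>\<beta>. if \<beta> = \<alpha> then 1 else 0)"

definition one_z :: "nat list \<Rightarrow> int" where
  "one_z = bas []"

definition scal :: "int \<Rightarrow> (nat list \<Rightarrow> int) \<Rightarrow> (nat list \<Rightarrow> int)" where
  "scal c f = (\<lambda>\<alpha>. c * f \<alpha>)"

definition homogeneous :: "nat \<Rightarrow> (nat list \<Rightarrow> int) \<Rightarrow> bool" where
  "homogeneous w f \<longleftrightarrow> (\<forall>\<alpha>\<in>supp f. sum_list \<alpha> = w)"

fun qsh :: "nat list \<Rightarrow> nat list \<Rightarrow> nat list multiset" where
  "qsh [] ys = {#ys#}"
| "qsh (x # xs) [] = {#x # xs#}"
| "qsh (x # xs) (y # ys) =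
     image_mset ((#) x) (qsh xs (y # ys)) + image_mset ((#) y) (qsh (x # xs) ys)
     + image_mset ((#) (x + y)) (qsh xs ys)"

definition qs_mult :: "(nat list \<Rightarrow> int) \<Rightarrow> (nat list \<Rightarrow> int) \<Rightarrow> (nat list \<Rightarrow> int)" where
  "qs_mult f g = (\<lambda>\<gamma>. \<Sum>\<alpha>\<in>supp f. \<Sum>\<beta>\<in>supp g. f \<alpha> * g \<beta> * int (count (qsh \<alpha> \<beta>) \<gamma>))"

definition qs_prod_list :: "(nat list \<Rightarrow> int) list \<Rightarrow> (nat list \<Rightarrow> int)" where
  "qs_prod_list xs = foldr qs_mult xs one_z"

text \<open>The monomial prod_{x in m} x for a finite multiset m (QSymm is commutative
  and associative, so the order chosen is irrelevant).\<close>
definition qs_monom :: "(nat list \<Rightarrow> int) multiset \<Rightarrow> (nat list \<Rightarrow> int)" where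
  "qs_monom m = qs_prod_list (SOME xs. mset xs = m)"

definition free_poly_basis :: "(nat list \<Rightarrow> int) set \<Rightarrow> bool" where
  "free_poly_basis \<Phi> \<longleftrightarrow>
     \<Phi> \<subseteq> zcomp \<and> (\<forall>\<phi>\<in>\<Phi>. \<exists>w. homogeneous w \<phi>) \<and>
     (\<forall>M c. finite M \<and> (\<forall>m\<in>M. set_mset m \<subseteq> \<Phi>) \<and>
            (\<Sum>m\<in>M. scal (c m) (qs_monom m)) = (\<lambda>_. 0) \<longrightarrow> (\<forall>m\<in>M. c m = 0)) \<and>
     (\<forall>f\<in>zcomp. \<exists>M c. finite M \<and> (\<forall>m\<in>M. set_mset m \<subseteq> \<Phi>) \<and>
            f = (\<Sum>m\<in>M. scal (c m) (qs_monom m)))"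

definition qs_ring_hom :: "((nat list \<Rightarrow> int) \<Rightarrow> int) \<Rightarrow> bool" where
  "qs_ring_hom \<chi> \<longleftrightarrow> \<chi> one_z = 1 \<and>
     (\<forall>f\<in>zcomp. \<forall>g\<in>zcomp. \<chi> (f + g) = \<chi> f + \<chi> g \<and> \<chi> (qs_mult f g) = \<chi> f * \<chi> g)"

definition ns_mult :: "(nat list \<Rightarrow> int) \<Rightarrow> (nat list \<Rightarrow> int) \<Rightarrow> (nat list \<Rightarrow> int)" where
  "ns_mult f g = (\<lambda>\<gamma>. \<Sum>\<alpha>\<in>supp f. \<Sum>\<beta>\<in>supp g. if \<alpha> @ \<beta> = \<gamma> then f \<alpha> * g \<beta> else 0)"

text \<open>Z_0 = 1: prepend a letter only if it is nonzero\<close>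
definition zc :: "nat \<Rightarrow> nat list \<Rightarrow> nat list" where
  "zc i \<beta> = (if i = 0 then \<beta> else i # \<beta>)"

text \<open>Delta(Z_alpha) = sum of Z_beta (x) Z_gamma over this multiset of pairs,
  from Delta(Z_a) = sum_{i+j=a} Z_i (x) Z_j and multiplicativity.\<close>
fun cop :: "nat list \<Rightarrow> (nat list \<times> nat list) multiset" where
  "cop [] = {#([], [])#}"
| "cop (a # \<alpha>) = (\<Sum>i\<in>{0..a}. image_mset (\<lambda>(\<beta>, \<gamma>). (zc i \<beta>, zc (a - i) \<gamma>)) (cop \<alpha>))"

text \<open>elements of NSymm (x) NSymm as coefficient functions on pairs of compositions\<close>
definition coprod :: "(nat list \<Rightarrow> int) \<Rightarrow> (nat list \<times> nat list \<Rightarrow> int)" where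
  "coprod f = (\<lambda>p. \<Sum>\<alpha>\<in>supp f. f \<alpha> * int (count (cop \<alpha>) p))"

definition tens :: "(nat list \<Rightarrow> int) \<Rightarrow> (nat list \<Rightarrow> int) \<Rightarrow> (nat list \<times> nat list \<Rightarrow> int)" where
  "tens f g = (\<lambda>(\<beta>, \<gamma>). f \<beta> * g \<gamma>)"

definition counit :: "(nat list \<Rightarrow> int) \<Rightarrow> int" where
  "counit f = f []"

text \<open>h (x) h applied to an element of the tensor square (linear extension)\<close>
definition tens_map :: "((nat list \<Rightarrow> int) \<Rightarrow> (nat list \<Rightarrow> int)) \<Rightarrow>
     (nat list \<times> nat list \<Rightarrow> int) \<Rightarrow> (nat list \<times> nat list \<Rightarrow> int)" where
  "tens_map h T = (\<Sum>q\<in>supp T. (\<lambda>p. T q * tens (h (bas (fst q))) (h (bas (snd q))) p))"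

text \<open>Hopf algebra endomorphism of NSymm (= bialgebra endomorphism; compatibility
  with the antipode is automatic).\<close>
definition ns_hopf_endo :: "((nat list \<Rightarrow> int) \<Rightarrow> (nat list \<Rightarrow> int)) \<Rightarrow> bool" where
  "ns_hopf_endo h \<longleftrightarrow> (\<forall>x\<in>zcomp. h x \<in> zcomp) \<and> h one_z = one_z \<and>
     (\<forall>x\<in>zcomp. \<forall>y\<in>zcomp. h (x + y) = h x + h y \<and> h (ns_mult x y) = ns_mult (h x) (h y)) \<and>
     (\<forall>x\<in>zcomp. counit (h x) = counit x \<and> coprod (h x) = tens_map h (coprod x))"

definition dseq :: "((nat list \<Rightarrow> int) \<Rightarrow> int) \<Rightarrow> nat \<Rightarrow> (nat list \<Rightarrow> int)" where
  "dseq \<chi> i = (\<lambda>\<alpha>. if is_comp \<alpha> \<and> sum_list \<alpha> = i then \<chi> (bas \<alpha>) else 0)"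

end

theory Submission
  imports Defs
begin

(* Under the pairing <M_alpha, Z_beta> = [alpha = beta], the coproduct of NSymm is dual to the
   quasi-shuffle product of QSymm: (alpha, beta) occurs in cop gamma exactly as often as gamma
   occurs in qsh alpha beta.  So the coefficient of Z_alpha (x) Z_beta in Delta d_m is
   chi(M_alpha M_beta) = chi(M_alpha) chi(M_beta) when wt alpha + wt beta = m, and 0 otherwise:
   (d_m) is a divided power sequence.  Expanding M_alpha in the free basis Phi, homogeneity leaves
   only monomials of weight wt alpha; chi kills every monomial containing some phi' <> phi, and
   the powers of phi have weights divisible by n.  Hence chi(M_alpha) = 0 unless n divides
   wt alpha, and d_0, d_n, d_2n, ... is again a divided power sequence.  As NSymm is free on
   Z_1, Z_2, ... and Delta is multiplicative with Delta Z_k = sum Z_i (x) Z_(k-i), the assignment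
   Z_k |-> d_kn extends to a bialgebra endomorphism, unique because it is fixed on every
   Z_alpha = Z_a1 ... Z_ak. *)

section \<open>Finitely supported integer-valued functions\<close>

definition delta :: "'a \<Rightarrow> 'a \<Rightarrow> int" where
  "delta x = (\<lambda>y. if y = x then 1 else 0)"

definition zscale :: "int \<Rightarrow> ('a \<Rightarrow> int) \<Rightarrow> 'a \<Rightarrow> int" where
  "zscale c u = (\<lambda>x. c * u x)"

definition fin_supp :: "('a \<Rightarrow> int) \<Rightarrow> bool" where
  "fin_supp u \<longleftrightarrow> finite (supp u)"

definition lin_ext :: "('a \<Rightarrow> 'b \<Rightarrow> int) \<Rightarrow> ('a \<Rightarrow> int) \<Rightarrow> 'b \<Rightarrow> int" where
  "lin_ext L u = (\<lambda>z. \<Sum>x\<in>supp u. u x * L x z)"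

definition mset_fun :: "'a multiset \<Rightarrow> 'a \<Rightarrow> int" where
  "mset_fun M = (\<lambda>x. int (count M x))"

lemma sum_fun_apply: "sum f A z = (\<Sum>i\<in>A. f i z)"
  by (induct A rule: infinite_finite_induct) auto

lemma supp_delta [simp]: "supp (delta x) = {x}"
  by (auto simp: supp_def delta_def)

lemma not_in_supp: "x \<notin> supp u \<Longrightarrow> u x = 0"
  by (simp add: supp_def)

lemma supp_add: "supp (u + v) \<subseteq> supp u \<union> supp v"
  by (auto simp: supp_def)

lemma supp_zscale: "supp (zscale c u) \<subseteq> supp u"
  by (auto simp: supp_def zscale_def)

lemma supp_zero [simp]: "supp 0 = {}"
  by (auto simp: supp_def)

lemma fin_supp_delta [simp]: "fin_supp (delta x)"
  by (simp add: fin_supp_def)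

lemma fin_supp_zero [simp]: "fin_supp 0"
  by (simp add: fin_supp_def)

lemma fin_supp_add [intro]: "fin_supp u \<Longrightarrow> fin_supp v \<Longrightarrow> fin_supp (u + v)"
  unfolding fin_supp_def by (rule finite_subset[OF supp_add]) auto

lemma fin_supp_zscale [intro]: "fin_supp u \<Longrightarrow> fin_supp (zscale c u)"
  unfolding fin_supp_def by (rule finite_subset[OF supp_zscale])

lemma zscale_zero [simp]: "zscale c 0 = 0" "zscale 0 u = 0"
  by (auto simp: zscale_def fun_eq_iff)

lemma supp_mset_fun [simp]: "supp (mset_fun M) = set_mset M"
  by (auto simp: supp_def mset_fun_def)

lemma fin_supp_mset_fun [simp]: "fin_supp (mset_fun M)"
  by (simp add: fin_supp_def)

lemma mset_fun_empty [simp]: "mset_fun {#} = 0"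
  by (auto simp: mset_fun_def fun_eq_iff)

lemma mset_fun_single: "mset_fun {#x#} = delta x"
  by (auto simp: mset_fun_def delta_def fun_eq_iff)

lemma mset_fun_add_mset: "mset_fun (add_mset x M) = delta x + mset_fun M"
  by (auto simp: mset_fun_def delta_def fun_eq_iff)

lemma mset_fun_sum: "mset_fun (sum F I) = (\<Sum>i\<in>I. mset_fun (F i))"
  by (induct I rule: infinite_finite_induct) (auto simp: mset_fun_def fun_eq_iff sum_fun_apply)

lemma lin_ext_eq_sum_superset:
  assumes "finite A" "supp u \<subseteq> A"
  shows "lin_ext L u = (\<lambda>z. \<Sum>x\<in>A. u x * L x z)"
  unfolding lin_ext_def
  by (rule ext, rule sum.mono_neutral_left) (use assms in \<open>auto simp: supp_def\<close>)

lemma lin_ext_eq_sum_zscale: "lin_ext L u = (\<Sum>x\<in>supp u. zscale (u x) (L x))"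
  by (auto simp: lin_ext_def zscale_def fun_eq_iff sum_fun_apply)

lemma lin_ext_zero [simp]: "lin_ext L 0 = 0"
  by (auto simp: lin_ext_def fun_eq_iff)

lemma lin_ext_delta [simp]: "lin_ext L (delta x) = L x"
  by (simp add: lin_ext_def) (simp add: delta_def)

lemma lin_ext_cong: "(\<And>x. x \<in> supp u \<Longrightarrow> L x = L' x) \<Longrightarrow> lin_ext L u = lin_ext L' u"
  by (auto simp: lin_ext_def fun_eq_iff intro!: sum.cong)

lemma lin_ext_add:
  assumes "fin_supp u" "fin_supp v"
  shows "lin_ext L (u + v) = lin_ext L u + lin_ext L v"
proof -
  let ?A = "supp u \<union> supp v"
  have A: "finite ?A" using assms by (auto simp: fin_supp_def)
  have "lin_ext L u = (\<lambda>z. \<Sum>x\<in>?A. u x * L x z)" "lin_ext L v = (\<lambda>z. \<Sum>x\<in>?A. v x * L x z)"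
    by (rule lin_ext_eq_sum_superset[OF A], blast)+
  then show ?thesis
    by (simp add: lin_ext_eq_sum_superset[OF A supp_add] fun_eq_iff distrib_right sum.distrib)
qed

lemma lin_ext_add_left: "lin_ext (\<lambda>x. L x + K x) u = lin_ext L u + lin_ext K u"
  by (auto simp: lin_ext_def fun_eq_iff distrib_left sum.distrib)

lemma lin_ext_swap: "lin_ext (\<lambda>y. lin_ext (\<lambda>z. K y z) w) v = lin_ext (\<lambda>z. lin_ext (\<lambda>y. K y z) v) w"
  by (auto simp: lin_ext_def fun_eq_iff sum_distrib_left mult.left_commute intro: sum.swap)

lemma supp_lin_ext: "supp (lin_ext L u) \<subseteq> (\<Union>x\<in>supp u. supp (L x))"
proof
  fix z assume "z \<in> supp (lin_ext L u)"
  then have "(\<Sum>x\<in>supp u. u x * L x z) \<noteq> 0" by (simp add: supp_def lin_ext_def)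
  then obtain x where "x \<in> supp u" "u x * L x z \<noteq> 0"
    using sum.neutral[of "supp u" "\<lambda>x. u x * L x z"] by blast
  then show "z \<in> (\<Union>x\<in>supp u. supp (L x))" by (auto simp: supp_def)
qed

lemma fin_supp_lin_ext [intro]:
  "fin_supp u \<Longrightarrow> (\<And>x. x \<in> supp u \<Longrightarrow> fin_supp (L x)) \<Longrightarrow> fin_supp (lin_ext L u)"
  unfolding fin_supp_def by (rule finite_subset[OF supp_lin_ext]) auto

lemma lin_ext_delta_id: "fin_supp u \<Longrightarrow> lin_ext delta u = u"
  by (auto simp: lin_ext_def delta_def fun_eq_iff fin_supp_def supp_def if_distrib cong: if_cong)

definition int_submodule :: "(('a \<Rightarrow> int) \<Rightarrow> bool) \<Rightarrow> bool" where
  "int_submodule P \<longleftrightarrow> P 0 \<and> (\<forall>u v. P u \<longrightarrow> P v \<longrightarrow> P (u + v)) \<and> (\<forall>u c. P u \<longrightarrow> P (zscale c u))"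

definition additive_on :: "(('a \<Rightarrow> int) \<Rightarrow> bool) \<Rightarrow> (('a \<Rightarrow> int) \<Rightarrow> 'c::ab_group_add) \<Rightarrow> bool" where
  "additive_on P T \<longleftrightarrow> (\<forall>u v. P u \<longrightarrow> P v \<longrightarrow> T (u + v) = T u + T v)"

lemma int_submodule_fin_supp: "int_submodule fin_supp"
  by (auto simp: int_submodule_def)

lemma additive_onD: "additive_on P T \<Longrightarrow> P u \<Longrightarrow> P v \<Longrightarrow> T (u + v) = T u + T v"
  unfolding additive_on_def by blast

lemma additive_on_zero: "int_submodule P \<Longrightarrow> additive_on P T \<Longrightarrow> T 0 = 0"
  using additive_onD[of P T 0 0] by (simp add: int_submodule_def)

lemma int_submodule_sum:
  "int_submodule P \<Longrightarrow> (\<And>i. i \<in> I \<Longrightarrow> P (u i)) \<Longrightarrow> P (sum u I)"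
  by (induct I rule: infinite_finite_induct) (auto simp: int_submodule_def)

lemma additive_on_sum:
  assumes P: "int_submodule P" and T: "additive_on P T" and u: "\<And>i. i \<in> I \<Longrightarrow> P (u i)"
  shows "T (sum u I) = (\<Sum>i\<in>I. T (u i))"
  using u
proof (induct I rule: infinite_finite_induct)
  case (insert x F)
  have "P (sum u F)" using insert by (intro int_submodule_sum[OF P]) auto
  then have "T (u x + sum u F) = T (u x) + T (sum u F)"
    using insert by (intro additive_onD[OF T]) auto
  moreover have "T (sum u F) = (\<Sum>i\<in>F. T (u i))" using insert by blast
  ultimately show ?case by (simp only: sum.insert[OF insert(1,2)])
qed (simp_all add: additive_on_zero[OF P T])

lemma additive_on_zscale:
  fixes T :: "('a \<Rightarrow> int) \<Rightarrow> int"
  assumes P: "int_submodule P" and T: "additive_on P T" and u: "P u"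
  shows "T (zscale c u) = c * T u"
proof -
  have Pc: "P (zscale c u)" for c using P u by (simp add: int_submodule_def)
  have nat: "T (zscale (int k) u) = int k * T u" for k
  proof (induct k)
    case (Suc k)
    have "zscale (int (Suc k)) u = zscale (int k) u + u"
      by (auto simp: zscale_def fun_eq_iff algebra_simps)
    then have "T (zscale (int (Suc k)) u) = int k * T u + T u"
      using Suc additive_onD[OF T Pc u, of "int k"] by (simp only:)
    then show ?case by (simp add: algebra_simps)
  qed (simp only: of_nat_0 zscale_zero mult_zero_left additive_on_zero[OF P T])
  have neg: "T (zscale (- int k) u) = - int k * T u" for k
  proof -
    have "zscale (- int k) u + zscale (int k) u = 0"
      by (auto simp: zscale_def fun_eq_iff)
    then have "T (zscale (- int k) u) + T (zscale (int k) u) = 0"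
      using additive_onD[OF T Pc Pc] additive_on_zero[OF P T] by metis
    then show ?thesis using nat[of k] by simp
  qed
  show ?thesis
  proof (cases "0 \<le> c")
    case True
    then show ?thesis using nat[of "nat c"] by simp
  next
    case False
    then show ?thesis using neg[of "nat (- c)"] by simp
  qed
qed

lemma additive_on_lin_ext_int:
  fixes T :: "('a \<Rightarrow> int) \<Rightarrow> int"
  assumes P: "int_submodule P" and T: "additive_on P T" and L: "\<And>x. x \<in> supp u \<Longrightarrow> P (L x)"
  shows "T (lin_ext L u) = (\<Sum>x\<in>supp u. u x * T (L x))"
proof -
  have "P (zscale (u x) (L x))" if "x \<in> supp u" for x
    using P L that by (simp add: int_submodule_def)
  then show ?thesis
    unfolding lin_ext_eq_sum_zscale
    by (simp add: additive_on_sum[OF P T] additive_on_zscale[OF P T L])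
qed

lemma additive_on_lin_ext:
  fixes T :: "('a \<Rightarrow> int) \<Rightarrow> 'b \<Rightarrow> int"
  assumes P: "int_submodule P" and T: "additive_on P T" and L: "\<And>x. x \<in> supp u \<Longrightarrow> P (L x)"
  shows "T (lin_ext L u) = lin_ext (\<lambda>x. T (L x)) u"
proof
  fix z
  have "additive_on P (\<lambda>u. T u z)"
    using T by (simp add: additive_on_def)
  from additive_on_lin_ext_int[OF P this L] show "T (lin_ext L u) z = lin_ext (\<lambda>x. T (L x)) u z"
    by (simp add: lin_ext_def)
qed

lemma additive_on_lin_ext_arg: "additive_on fin_supp (lin_ext L)"
  by (simp add: additive_on_def lin_ext_add)

lemma lin_ext_lin_ext:
  "(\<And>x. x \<in> supp u \<Longrightarrow> fin_supp (L x)) \<Longrightarrow> lin_ext K (lin_ext L u) = lin_ext (\<lambda>x. lin_ext K (L x)) u"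
  by (rule additive_on_lin_ext[OF int_submodule_fin_supp additive_on_lin_ext_arg])

lemma lin_ext_sum:
  "(\<And>i. i \<in> I \<Longrightarrow> fin_supp (F i)) \<Longrightarrow> lin_ext L (sum F I) = (\<Sum>i\<in>I. lin_ext L (F i))"
  by (rule additive_on_sum[OF int_submodule_fin_supp additive_on_lin_ext_arg])

lemma image_mset_eq_lin_ext: "mset_fun (image_mset g M) = lin_ext (\<lambda>x. delta (g x)) (mset_fun M)"
proof (induct M)
  case (add x M)
  have "lin_ext (\<lambda>x. delta (g x)) (delta x + mset_fun M)
      = delta (g x) + lin_ext (\<lambda>x. delta (g x)) (mset_fun M)"
    by (simp add: lin_ext_add)
  then show ?case using add by (simp only: mset_fun_add_mset image_mset_add_mset lin_ext_delta)
qed (simp add: fun_eq_iff lin_ext_def)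

definition conv :: "('a \<Rightarrow> 'b \<Rightarrow> 'c) \<Rightarrow> ('a \<Rightarrow> int) \<Rightarrow> ('b \<Rightarrow> int) \<Rightarrow> 'c \<Rightarrow> int" where
  "conv f u v = lin_ext (\<lambda>x. lin_ext (\<lambda>y. delta (f x y)) v) u"

lemma conv_delta_delta [simp]: "conv f (delta x) (delta y) = delta (f x y)"
  by (simp add: conv_def)

lemma fin_supp_conv [intro]: "fin_supp u \<Longrightarrow> fin_supp v \<Longrightarrow> fin_supp (conv f u v)"
  unfolding conv_def by (intro fin_supp_lin_ext) auto

lemma additive_on_conv_left: "additive_on fin_supp (\<lambda>u. conv f u v)"
  unfolding conv_def by (rule additive_on_lin_ext_arg)

lemma additive_on_conv_right: "additive_on fin_supp (conv f u)"
  unfolding additive_on_def conv_def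
  by (auto simp: lin_ext_add lin_ext_add_left[symmetric] intro!: lin_ext_cong)

lemma conv_sum_left:
  "(\<And>i. i \<in> I \<Longrightarrow> fin_supp (F i)) \<Longrightarrow> conv f (sum F I) v = (\<Sum>i\<in>I. conv f (F i) v)"
  by (rule additive_on_sum[OF int_submodule_fin_supp additive_on_conv_left])

lemma conv_lin_ext_left:
  "(\<And>x. x \<in> supp u \<Longrightarrow> fin_supp (A x)) \<Longrightarrow> conv f (lin_ext A u) v = lin_ext (\<lambda>x. conv f (A x) v) u"
  by (rule additive_on_lin_ext[OF int_submodule_fin_supp additive_on_conv_left])

lemma conv_lin_ext_right:
  "(\<And>y. y \<in> supp v \<Longrightarrow> fin_supp (B y)) \<Longrightarrow> conv f u (lin_ext B v) = lin_ext (\<lambda>y. conv f u (B y)) v"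
  by (rule additive_on_lin_ext[OF int_submodule_fin_supp additive_on_conv_right])

lemma conv_lin_ext_lin_ext:
  assumes "\<And>x. x \<in> supp u \<Longrightarrow> fin_supp (A x)" "\<And>y. y \<in> supp v \<Longrightarrow> fin_supp (B y)"
  shows "conv f (lin_ext A u) (lin_ext B v) = lin_ext (\<lambda>x. lin_ext (\<lambda>y. conv f (A x) (B y)) v) u"
  using assms by (simp add: conv_lin_ext_left conv_lin_ext_right[where u = "A _"] cong: lin_ext_cong)

lemma lin_ext_conv:
  assumes "fin_supp v"
  shows "lin_ext K (conv f u v) = lin_ext (\<lambda>x. lin_ext (\<lambda>y. K (f x y)) v) u"
proof -
  have "lin_ext K (conv f u v) = lin_ext (\<lambda>x. lin_ext K (lin_ext (\<lambda>y. delta (f x y)) v)) u"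
    unfolding conv_def using assms by (intro lin_ext_lin_ext fin_supp_lin_ext) auto
  also have "\<dots> = lin_ext (\<lambda>x. lin_ext (\<lambda>y. K (f x y)) v) u"
    by (intro lin_ext_cong) (simp add: lin_ext_lin_ext)
  finally show ?thesis .
qed

lemma conv_assoc:
  assumes f: "\<And>x y z. f (f x y) z = f x (f y z)" and "fin_supp v" "fin_supp w"
  shows "conv f (conv f u v) w = conv f u (conv f v w)"
proof -
  have "conv f (conv f u v) w = lin_ext (\<lambda>x. lin_ext (\<lambda>y. lin_ext (\<lambda>z. delta (f (f x y) z)) w) v) u"
    unfolding conv_def[of f "conv f u v"] using assms by (simp add: lin_ext_conv)
  moreover have "conv f u (conv f v w) = lin_ext (\<lambda>x. lin_ext (\<lambda>y. lin_ext (\<lambda>z. delta (f x (f y z))) w) v) u"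
    unfolding conv_def[of f u] using assms by (simp add: lin_ext_conv)
  ultimately show ?thesis by (simp add: f)
qed

lemma conv_delta_left: "(\<And>z. f e z = z) \<Longrightarrow> fin_supp v \<Longrightarrow> conv f (delta e) v = v"
  by (simp add: conv_def lin_ext_delta_id)

lemma conv_delta_right: "(\<And>z. f z e = z) \<Longrightarrow> fin_supp u \<Longrightarrow> conv f u (delta e) = u"
  by (simp add: conv_def lin_ext_delta_id)

lemma conv_interchange:
  assumes f: "\<And>x y z w. f (g x y) (h z w) = g' (f1 x z) (f2 y w)"
    and "fin_supp b" "fin_supp c" "fin_supp d"
  shows "conv f (conv g a b) (conv h c d) = conv g' (conv f1 a c) (conv f2 b d)"
proof -
  let ?K = "\<lambda>x y z w. delta (f (g x y) (h z w))"
  have "conv f (conv g a b) (conv h c d) = lin_ext (\<lambda>x. lin_ext (\<lambda>y. lin_ext (\<lambda>z. lin_ext (?K x y z) d) c) b) a"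
    unfolding conv_def[of f "conv g a b"] using assms by (simp add: lin_ext_conv)
  also have "\<dots> = lin_ext (\<lambda>x. lin_ext (\<lambda>z. lin_ext (\<lambda>y. lin_ext (?K x y z) d) b) c) a"
    by (intro lin_ext_cong) (rule lin_ext_swap)
  also have "\<dots> = conv g' (conv f1 a c) (conv f2 b d)"
    unfolding conv_def[of g' "conv f1 a c"] using assms by (simp add: lin_ext_conv f)
  finally show ?thesis .
qed

section \<open>The bialgebra \<open>NSymm\<close>\<close>

lemma bas_eq_delta: "bas = delta"
  by (auto simp: bas_def delta_def fun_eq_iff)

lemma one_z_eq_delta: "one_z = delta []"
  by (simp add: one_z_def bas_eq_delta)

lemma ns_mult_eq_conv: "ns_mult = conv (@)"
  unfolding ns_mult_def conv_def lin_ext_def delta_def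
  by (auto simp: fun_eq_iff sum_distrib_left intro!: sum.cong)

lemma ns_mult_assoc: "fin_supp v \<Longrightarrow> fin_supp w \<Longrightarrow> ns_mult (ns_mult u v) w = ns_mult u (ns_mult v w)"
  by (simp add: ns_mult_eq_conv conv_assoc)

lemma ns_mult_one_left: "fin_supp v \<Longrightarrow> ns_mult one_z v = v"
  by (simp add: ns_mult_eq_conv one_z_eq_delta conv_delta_left)

lemma ns_mult_one_right: "fin_supp u \<Longrightarrow> ns_mult u one_z = u"
  by (simp add: ns_mult_eq_conv one_z_eq_delta conv_delta_right)

lemma counit_ns_mult:
  assumes "fin_supp u" "fin_supp v"
  shows "counit (ns_mult u v) = counit u * counit v"
proof -
  have "delta (x @ y) [] = delta x [] * delta y []" for x y :: "nat list"
    by (simp add: delta_def)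
  then have "ns_mult u v [] = (\<Sum>x\<in>supp u. \<Sum>y\<in>supp v. (u x * delta x []) * (v y * delta y []))"
    by (simp add: ns_mult_eq_conv conv_def lin_ext_def sum_distrib_left mult_ac)
  also have "\<dots> = lin_ext delta u [] * lin_ext delta v []"
    by (simp add: lin_ext_def sum_product)
  finally show ?thesis
    using assms by (simp add: counit_def lin_ext_delta_id)
qed

lemma tens_apply: "tens f g (\<beta>, \<gamma>) = f \<beta> * g \<gamma>"
  by (simp add: tens_def)

lemma tens_zero_left [simp]: "tens 0 v = 0"
  by (auto simp: tens_def fun_eq_iff)

lemma tens_delta_delta: "tens (delta x) (delta y) = delta (x, y)"
  by (auto simp: tens_def delta_def fun_eq_iff)

lemma tens_eq_conv:
  assumes "fin_supp a" "fin_supp b"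
  shows "tens a b = conv Pair a b"
proof (rule ext, clarify)
  fix p q :: "nat list"
  have "delta (x, y) (p, q) = delta x p * delta y q" for x y
    by (simp add: delta_def)
  then have "conv Pair a b (p, q) = (\<Sum>x\<in>supp a. \<Sum>y\<in>supp b. (a x * delta x p) * (b y * delta y q))"
    by (simp add: conv_def lin_ext_def sum_distrib_left mult_ac)
  also have "\<dots> = lin_ext delta a p * lin_ext delta b q"
    by (simp add: lin_ext_def sum_product)
  finally show "tens a b (p, q) = conv Pair a b (p, q)"
    using assms by (simp add: tens_def lin_ext_delta_id)
qed

definition pair_append :: "'a list \<times> 'b list \<Rightarrow> 'a list \<times> 'b list \<Rightarrow> 'a list \<times> 'b list" where
  "pair_append p q = (fst p @ fst q, snd p @ snd q)"

lemma conv_pair_append_tens: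
  assumes "fin_supp a" "fin_supp b" "fin_supp c" "fin_supp d"
  shows "conv pair_append (tens a b) (tens c d) = tens (ns_mult a c) (ns_mult b d)"
  using assms by (simp add: tens_eq_conv ns_mult_eq_conv conv_interchange pair_append_def fin_supp_conv)

lemma tens_map_eq_lin_ext: "tens_map h T = lin_ext (\<lambda>q. tens (h (delta (fst q))) (h (delta (snd q)))) T"
  by (auto simp: tens_map_def lin_ext_def fun_eq_iff sum_fun_apply bas_eq_delta)

definition cop_fun :: "nat list \<Rightarrow> nat list \<times> nat list \<Rightarrow> int" where
  "cop_fun \<alpha> = mset_fun (cop \<alpha>)"

lemma coprod_eq_lin_ext: "coprod = lin_ext cop_fun"
  by (auto simp: coprod_def lin_ext_def cop_fun_def mset_fun_def fun_eq_iff)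

lemma fin_supp_cop_fun [simp]: "fin_supp (cop_fun \<alpha>)"
  by (simp add: cop_fun_def)

definition cop_step :: "nat \<Rightarrow> nat \<Rightarrow> nat list \<times> nat list \<Rightarrow> nat list \<times> nat list" where
  "cop_step a i q = (zc i (fst q), zc (a - i) (snd q))"

lemma cop_Cons_eq_sum: "cop (a # \<alpha>) = (\<Sum>i\<in>{0..a}. image_mset (cop_step a i) (cop \<alpha>))"
proof -
  have "(\<lambda>(\<beta>, \<gamma>). (zc i \<beta>, zc (a - i) \<gamma>)) = cop_step a i" for i
    by (auto simp: cop_step_def fun_eq_iff)
  then show ?thesis by simp
qed

lemma cop_fun_Nil: "cop_fun [] = delta ([], [])"
  by (simp add: cop_fun_def mset_fun_single)

lemma cop_fun_Cons: "cop_fun (a # \<alpha>) = (\<Sum>i\<in>{0..a}. lin_ext (\<lambda>q. delta (cop_step a i q)) (cop_fun \<alpha>))"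
  unfolding cop_fun_def cop_Cons_eq_sum mset_fun_sum image_mset_eq_lin_ext ..

lemma lin_ext_delta_conv:
  assumes h: "\<And>q r. h (f q r) = f (h q) r" and "fin_supp u" "fin_supp v"
  shows "lin_ext (\<lambda>q. delta (h q)) (conv f u v) = conv f (lin_ext (\<lambda>q. delta (h q)) u) v"
proof -
  have "lin_ext (\<lambda>q. delta (h q)) (conv f u v) = lin_ext (\<lambda>x. lin_ext (\<lambda>y. conv f (delta (h x)) (delta y)) v) u"
    using assms by (simp add: lin_ext_conv h)
  also have "\<dots> = conv f (lin_ext (\<lambda>q. delta (h q)) u) (lin_ext delta v)"
    by (simp add: conv_lin_ext_lin_ext)
  finally show ?thesis using assms by (simp add: lin_ext_delta_id)
qed

lemma cop_fun_append: "cop_fun (\<alpha> @ \<beta>) = conv pair_append (cop_fun \<alpha>) (cop_fun \<beta>)"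
proof (induct \<alpha>)
  case Nil
  then show ?case by (simp add: cop_fun_Nil conv_delta_left pair_append_def)
next
  case (Cons a \<alpha>)
  have step: "cop_step a i (pair_append q r) = pair_append (cop_step a i q) r" for i q r
    by (simp add: cop_step_def pair_append_def zc_def)
  have "cop_fun ((a # \<alpha>) @ \<beta>)
      = (\<Sum>i\<in>{0..a}. lin_ext (\<lambda>q. delta (cop_step a i q)) (conv pair_append (cop_fun \<alpha>) (cop_fun \<beta>)))"
    by (simp add: cop_fun_Cons Cons)
  also have "\<dots> = (\<Sum>i\<in>{0..a}. conv pair_append (lin_ext (\<lambda>q. delta (cop_step a i q)) (cop_fun \<alpha>)) (cop_fun \<beta>))"
    by (simp add: lin_ext_delta_conv step)
  also have "\<dots> = conv pair_append (cop_fun (a # \<alpha>)) (cop_fun \<beta>)"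
    by (simp add: cop_fun_Cons conv_sum_left fin_supp_lin_ext)
  finally show ?case .
qed

lemma coprod_ns_mult:
  assumes "fin_supp v"
  shows "coprod (ns_mult u v) = conv pair_append (coprod u) (coprod v)"
  using assms
  by (simp add: coprod_eq_lin_ext ns_mult_eq_conv lin_ext_conv cop_fun_append conv_lin_ext_lin_ext)

lemma is_comp_simps [simp]:
  "is_comp []" "is_comp (a # \<alpha>) \<longleftrightarrow> 0 < a \<and> is_comp \<alpha>" "is_comp (\<alpha> @ \<beta>) \<longleftrightarrow> is_comp \<alpha> \<and> is_comp \<beta>"
  by (auto simp: is_comp_def)

lemma zcomp_iff: "u \<in> zcomp \<longleftrightarrow> fin_supp u \<and> (\<forall>\<alpha>\<in>supp u. is_comp \<alpha>)"
  by (simp add: zcomp_def fin_supp_def)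

lemma zcomp_fin_supp: "u \<in> zcomp \<Longrightarrow> fin_supp u"
  by (simp add: zcomp_iff)

lemma delta_in_zcomp [simp]: "delta \<alpha> \<in> zcomp \<longleftrightarrow> is_comp \<alpha>"
  by (simp add: zcomp_iff)

lemma one_z_in_zcomp [simp]: "one_z \<in> zcomp"
  by (simp add: one_z_eq_delta)

lemma int_submodule_zcomp: "int_submodule (\<lambda>u. u \<in> zcomp)"
  unfolding int_submodule_def zcomp_iff
proof (intro conjI allI impI)
  fix u v :: "nat list \<Rightarrow> int" and c
  assume u: "fin_supp u \<and> (\<forall>\<alpha>\<in>supp u. is_comp \<alpha>)"
  then show "fin_supp (zscale c u)" "\<forall>\<alpha>\<in>supp (zscale c u). is_comp \<alpha>"
    using supp_zscale[of c u] by auto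
  assume v: "fin_supp v \<and> (\<forall>\<alpha>\<in>supp v. is_comp \<alpha>)"
  then show "fin_supp (u + v)" "\<forall>\<alpha>\<in>supp (u + v). is_comp \<alpha>"
    using u supp_add[of u v] by auto
qed auto

lemma zscale_in_zcomp: "u \<in> zcomp \<Longrightarrow> zscale c u \<in> zcomp"
  using int_submodule_zcomp by (simp add: int_submodule_def)

lemma lin_ext_in_zcomp:
  assumes "fin_supp u" "\<And>\<alpha>. \<alpha> \<in> supp u \<Longrightarrow> L \<alpha> \<in> zcomp"
  shows "lin_ext L u \<in> zcomp"
proof -
  have "fin_supp (lin_ext L u)"
    using assms by (intro fin_supp_lin_ext) (auto simp: zcomp_fin_supp)
  moreover have "\<forall>\<alpha>\<in>supp (lin_ext L u). is_comp \<alpha>"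
    using supp_lin_ext[of L u] assms by (auto simp: zcomp_iff)
  ultimately show ?thesis by (simp add: zcomp_iff)
qed

lemma ns_mult_in_zcomp: "u \<in> zcomp \<Longrightarrow> v \<in> zcomp \<Longrightarrow> ns_mult u v \<in> zcomp"
  unfolding ns_mult_eq_conv conv_def
  by (intro lin_ext_in_zcomp) (auto simp: zcomp_iff intro!: lin_ext_in_zcomp)

lemma is_comp_length_le: "is_comp \<alpha> \<Longrightarrow> length \<alpha> \<le> sum_list \<alpha>"
  by (induct \<alpha>) auto

lemma is_comp_weight_0: "is_comp \<alpha> \<Longrightarrow> sum_list \<alpha> = 0 \<longleftrightarrow> \<alpha> = []"
  by (cases \<alpha>) auto

lemma finite_compositions: "finite {\<gamma>. is_comp \<gamma> \<and> sum_list \<gamma> = m}"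
proof (rule finite_subset[OF _ finite_lists_length_le[of "{0..m}" m]])
  show "{\<gamma>. is_comp \<gamma> \<and> sum_list \<gamma> = m} \<subseteq> {xs. set xs \<subseteq> {0..m} \<and> length xs \<le> m}"
    using is_comp_length_le member_le_sum_list by fastforce
qed simp

lemma is_comp_cop: "q \<in># cop \<gamma> \<Longrightarrow> is_comp (fst q) \<and> is_comp (snd q)"
proof (induct \<gamma> arbitrary: q)
  case (Cons a \<gamma>)
  then obtain i q' where "q' \<in># cop \<gamma>" "q = cop_step a i q'"
    by (auto simp: cop_Cons_eq_sum set_mset_sum simp del: cop.simps)
  then show ?case using Cons(1) by (auto simp: cop_step_def zc_def)
qed simp

section \<open>Divided power sequences and Hopf endomorphisms of \<open>NSymm\<close>\<close>

lemma ns_hopf_endo_eqI: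
  assumes g: "ns_hopf_endo g" and h: "ns_hopf_endo h"
    and gh: "\<forall>k\<ge>1. g (bas [k]) = h (bas [k])" and x: "x \<in> zcomp"
  shows "g x = h x"
proof -
  have additive: "additive_on (\<lambda>u. u \<in> zcomp) g" "additive_on (\<lambda>u. u \<in> zcomp) h"
    using g h by (auto simp: ns_hopf_endo_def additive_on_def)
  have on_basis: "g (delta \<alpha>) = h (delta \<alpha>)" if "is_comp \<alpha>" for \<alpha>
    using that
  proof (induct \<alpha>)
    case Nil
    then show ?case using g h by (simp add: ns_hopf_endo_def flip: one_z_eq_delta)
  next
    case (Cons a \<alpha>)
    have "delta (a # \<alpha>) = ns_mult (delta [a]) (delta \<alpha>)"
      by (simp add: ns_mult_eq_conv)
    then show ?case
      using g h gh Cons by (simp add: ns_hopf_endo_def bas_eq_delta)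
  qed
  have "g x = lin_ext (\<lambda>\<alpha>. g (delta \<alpha>)) x" "h x = lin_ext (\<lambda>\<alpha>. h (delta \<alpha>)) x"
    using additive_on_lin_ext[OF int_submodule_zcomp additive(1), of x delta]
      additive_on_lin_ext[OF int_submodule_zcomp additive(2), of x delta] x
    by (auto simp: zcomp_iff lin_ext_delta_id)
  then show ?thesis
    using x on_basis by (auto simp: zcomp_iff intro: lin_ext_cong)
qed

locale divided_power_seq =
  fixes D :: "nat \<Rightarrow> nat list \<Rightarrow> int"
  assumes D_in_zcomp: "D k \<in> zcomp"
    and D_0: "D 0 = one_z"
    and coprod_D: "coprod (D k) = (\<Sum>i\<in>{0..k}. tens (D i) (D (k - i)))"
    and counit_D: "0 < k \<Longrightarrow> counit (D k) = 0"
begin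

definition D_word :: "nat list \<Rightarrow> nat list \<Rightarrow> int" where
  "D_word \<alpha> = foldr (\<lambda>a. ns_mult (D a)) \<alpha> one_z"

definition hopf_ext :: "(nat list \<Rightarrow> int) \<Rightarrow> nat list \<Rightarrow> int" where
  "hopf_ext = lin_ext D_word"

lemma D_word_simps [simp]: "D_word [] = one_z" "D_word (a # \<alpha>) = ns_mult (D a) (D_word \<alpha>)"
  by (simp_all add: D_word_def)

lemma D_word_in_zcomp [simp]: "D_word \<alpha> \<in> zcomp"
  by (induct \<alpha>) (auto intro: ns_mult_in_zcomp D_in_zcomp)

lemma fin_supp_D_word [simp]: "fin_supp (D_word \<alpha>)"
  by (simp add: zcomp_fin_supp)

lemma fin_supp_D [simp]: "fin_supp (D k)"
  by (simp add: zcomp_fin_supp D_in_zcomp)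

lemma D_word_zc: "D_word (zc i \<beta>) = ns_mult (D i) (D_word \<beta>)"
  by (simp add: zc_def D_0 ns_mult_one_left)

lemma D_word_append: "D_word (\<alpha> @ \<beta>) = ns_mult (D_word \<alpha>) (D_word \<beta>)"
  by (induct \<alpha>) (simp_all add: ns_mult_one_left ns_mult_assoc)

lemma counit_D_word: "is_comp \<alpha> \<Longrightarrow> counit (D_word \<alpha>) = (if \<alpha> = [] then 1 else 0)"
  by (induct \<alpha>) (simp_all add: counit_ns_mult counit_D, simp add: counit_def one_z_eq_delta delta_def)

lemma coprod_D_word:
  "coprod (D_word \<alpha>) = lin_ext (\<lambda>q. tens (D_word (fst q)) (D_word (snd q))) (cop_fun \<alpha>)"
  (is "_ = lin_ext ?T _")
proof (induct \<alpha>)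
  case Nil
  then show ?case by (simp add: coprod_eq_lin_ext one_z_eq_delta cop_fun_Nil tens_delta_delta)
next
  case (Cons a \<alpha>)
  have fin_T: "fin_supp (?T q)" for q
    by (simp add: tens_eq_conv fin_supp_conv)
  have "coprod (D_word (a # \<alpha>)) = conv pair_append (coprod (D a)) (coprod (D_word \<alpha>))"
    by (simp add: coprod_ns_mult)
  also have "\<dots> = (\<Sum>i\<in>{0..a}. conv pair_append (tens (D i) (D (a - i))) (lin_ext ?T (cop_fun \<alpha>)))"
    by (simp add: coprod_D Cons conv_sum_left tens_eq_conv fin_supp_conv)
  also have "\<dots> = (\<Sum>i\<in>{0..a}. lin_ext (\<lambda>q. ?T (cop_step a i q)) (cop_fun \<alpha>))"
    by (simp add: conv_lin_ext_right fin_T conv_pair_append_tens cop_step_def D_word_zc)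
  also have "\<dots> = lin_ext ?T (cop_fun (a # \<alpha>))"
    by (simp add: cop_fun_Cons lin_ext_sum lin_ext_lin_ext fin_supp_lin_ext)
  finally show ?case .
qed

lemma hopf_ext_delta [simp]: "hopf_ext (delta \<alpha>) = D_word \<alpha>"
  by (simp add: hopf_ext_def)

lemma hopf_ext_bas_single: "hopf_ext (bas [k]) = D k"
  by (simp add: bas_eq_delta ns_mult_one_right)

lemma ns_hopf_endo_hopf_ext: "ns_hopf_endo hopf_ext"
  unfolding ns_hopf_endo_def
proof (intro conjI ballI)
  fix x y assume x: "x \<in> zcomp" and y: "y \<in> zcomp"
  then have fin: "fin_supp x" "fin_supp y" by (simp_all add: zcomp_fin_supp)
  show "hopf_ext x \<in> zcomp"
    unfolding hopf_ext_def using fin by (intro lin_ext_in_zcomp) auto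
  show "hopf_ext (x + y) = hopf_ext x + hopf_ext y"
    using fin by (simp add: hopf_ext_def lin_ext_add)
  have "hopf_ext (ns_mult x y) = lin_ext (\<lambda>\<alpha>. lin_ext (\<lambda>\<beta>. D_word (\<alpha> @ \<beta>)) y) x"
    using fin by (simp add: hopf_ext_def ns_mult_eq_conv lin_ext_conv)
  also have "\<dots> = ns_mult (hopf_ext x) (hopf_ext y)"
    by (simp add: hopf_ext_def D_word_append ns_mult_eq_conv conv_lin_ext_lin_ext)
  finally show "hopf_ext (ns_mult x y) = ns_mult (hopf_ext x) (hopf_ext y)" .
  have "counit (hopf_ext x) = (\<Sum>\<alpha>\<in>supp x. x \<alpha> * counit (D_word \<alpha>))"
    by (simp add: hopf_ext_def lin_ext_def counit_def)
  also have "\<dots> = (\<Sum>\<alpha>\<in>supp x. if \<alpha> = [] then x \<alpha> else 0)"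
    using x by (intro sum.cong) (auto simp: zcomp_iff counit_D_word)
  also have "\<dots> = counit x"
    using fin by (simp add: fin_supp_def counit_def supp_def)
  finally show "counit (hopf_ext x) = counit x" .
  show "coprod (hopf_ext x) = tens_map hopf_ext (coprod x)"
    using fin by (simp add: hopf_ext_def coprod_eq_lin_ext tens_map_eq_lin_ext lin_ext_lin_ext
        coprod_D_word[unfolded coprod_eq_lin_ext])
qed (simp add: hopf_ext_def one_z_eq_delta)

end

section \<open>Duality between quasi-shuffles and the coproduct\<close>

lemma qsh_Nil_right [simp]: "qsh \<alpha> [] = {#\<alpha>#}"
  by (cases \<alpha>) auto

lemma sum_list_qsh: "\<gamma> \<in># qsh \<alpha> \<beta> \<Longrightarrow> sum_list \<gamma> = sum_list \<alpha> + sum_list \<beta>"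
  by (induct \<alpha> \<beta> arbitrary: \<gamma> rule: qsh.induct) auto

lemma is_comp_qsh: "\<gamma> \<in># qsh \<alpha> \<beta> \<Longrightarrow> is_comp \<alpha> \<Longrightarrow> is_comp \<beta> \<Longrightarrow> is_comp \<gamma>"
  by (induct \<alpha> \<beta> arbitrary: \<gamma> rule: qsh.induct) auto

lemma count_image_mset_inj:
  assumes "inj f"
  shows "count (image_mset f M) (f x) = count M x"
proof -
  have "f -` {f x} \<inter> set_mset M = (if x \<in># M then {x} else {})"
    using assms by (auto dest: injD)
  then show ?thesis by (auto simp: count_image_mset not_in_iff)
qed

lemma count_image_mset_not_in_range: "(\<And>x. f x \<noteq> y) \<Longrightarrow> count (image_mset f M) y = 0"
  by (auto simp: count_image_mset)

lemma count_image_mset_Cons: "count (image_mset ((#) x) M) (a # \<gamma>) = (if x = a then count M \<gamma> else 0)"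
  by (auto simp: count_image_mset_inj inj_def intro: count_image_mset_not_in_range)

lemma count_qsh_Nil: "count (qsh \<alpha> \<beta>) [] = (if \<alpha> = [] \<and> \<beta> = [] then 1 else 0)"
  by (cases "(\<alpha>, \<beta>)" rule: qsh.cases) (auto simp: count_image_mset_not_in_range)

lemma count_qsh_Cons:
  "count (qsh \<alpha> \<beta>) (a # \<gamma>) =
     (case \<alpha> of [] \<Rightarrow> 0 | x # xs \<Rightarrow> if x = a then count (qsh xs \<beta>) \<gamma> else 0)
   + (case \<beta> of [] \<Rightarrow> 0 | y # ys \<Rightarrow> if y = a then count (qsh \<alpha> ys) \<gamma> else 0)
   + (case (\<alpha>, \<beta>) of (x # xs, y # ys) \<Rightarrow> if x + y = a then count (qsh xs ys) \<gamma> else 0 | _ \<Rightarrow> 0)"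
  by (cases "(\<alpha>, \<beta>)" rule: qsh.cases) (auto simp: count_image_mset_Cons split: list.split)

lemma count_image_mset_Cons_snd:
  "count (image_mset (\<lambda>q. (fst q, a # snd q)) M) (\<alpha>, \<beta>) =
    (case \<beta> of [] \<Rightarrow> 0 | y # ys \<Rightarrow> if y = a then count M (\<alpha>, ys) else 0)"
proof -
  have "inj (\<lambda>q. (fst q, a # snd q))"
    by (auto simp: inj_def prod_eq_iff)
  from count_image_mset_inj[OF this, of M "(\<alpha>, tl \<beta>)"] show ?thesis
    by (auto split: list.split intro: count_image_mset_not_in_range)
qed

lemma count_image_mset_Cons_fst:
  "count (image_mset (\<lambda>q. (a # fst q, snd q)) M) (\<alpha>, \<beta>) =
    (case \<alpha> of [] \<Rightarrow> 0 | x # xs \<Rightarrow> if x = a then count M (xs, \<beta>) else 0)"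
proof -
  have "inj (\<lambda>q. (a # fst q, snd q))"
    by (auto simp: inj_def prod_eq_iff)
  from count_image_mset_inj[OF this, of M "(tl \<alpha>, \<beta>)"] show ?thesis
    by (auto split: list.split intro: count_image_mset_not_in_range)
qed

lemma count_image_mset_Cons_both:
  "count (image_mset (\<lambda>q. (i # fst q, j # snd q)) M) (\<alpha>, \<beta>) =
    (case (\<alpha>, \<beta>) of (x # xs, y # ys) \<Rightarrow> if x = i \<and> y = j then count M (xs, ys) else 0 | _ \<Rightarrow> 0)"
proof -
  have "inj (\<lambda>q. (i # fst q, j # snd q))"
    by (auto simp: inj_def prod_eq_iff)
  from count_image_mset_inj[OF this, of M "(tl \<alpha>, tl \<beta>)"] show ?thesis
    by (auto split: list.split intro: count_image_mset_not_in_range)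
qed

lemma sum_split_point_unique:
  fixes x y a c :: nat
  assumes "0 < x" "0 < y"
  shows "(\<Sum>i\<in>{0<..<a}. if x = i \<and> y = a - i then c else 0) = (if x + y = a then c else 0)"
proof -
  have "(\<Sum>i\<in>{0<..<a}. if x = i \<and> y = a - i then c else 0)
      = (\<Sum>i\<in>{0<..<a}. if i = x then (if x + y = a then c else 0) else 0)"
    using assms by (intro sum.cong) auto
  also have "\<dots> = (if x + y = a then c else 0)"
    using assms by simp
  finally show ?thesis .
qed

lemma count_cop_Cons:
  assumes a: "0 < a" and \<alpha>: "is_comp \<alpha>" and \<beta>: "is_comp \<beta>"
  shows "count (cop (a # \<gamma>)) (\<alpha>, \<beta>) =
     (case \<alpha> of [] \<Rightarrow> 0 | x # xs \<Rightarrow> if x = a then count (cop \<gamma>) (xs, \<beta>) else 0)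
   + (case \<beta> of [] \<Rightarrow> 0 | y # ys \<Rightarrow> if y = a then count (cop \<gamma>) (\<alpha>, ys) else 0)
   + (case (\<alpha>, \<beta>) of (x # xs, y # ys) \<Rightarrow> if x + y = a then count (cop \<gamma>) (xs, ys) else 0 | _ \<Rightarrow> 0)"
proof -
  let ?c = "\<lambda>i. count (image_mset (cop_step a i) (cop \<gamma>)) (\<alpha>, \<beta>)"
  have "cop_step a a = (\<lambda>q. (a # fst q, snd q))" "cop_step a 0 = (\<lambda>q. (fst q, a # snd q))"
    using a by (auto simp: cop_step_def zc_def fun_eq_iff)
  then have ends: "?c a = (case \<alpha> of [] \<Rightarrow> 0 | x # xs \<Rightarrow> if x = a then count (cop \<gamma>) (xs, \<beta>) else 0)"
      "?c 0 = (case \<beta> of [] \<Rightarrow> 0 | y # ys \<Rightarrow> if y = a then count (cop \<gamma>) (\<alpha>, ys) else 0)"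
    by (simp_all add: count_image_mset_Cons_fst count_image_mset_Cons_snd)
  have "cop_step a i = (\<lambda>q. (i # fst q, (a - i) # snd q))" if "i \<in> {0<..<a}" for i
    using that by (auto simp: cop_step_def zc_def fun_eq_iff)
  then have "(\<Sum>i\<in>{0<..<a}. ?c i) = (\<Sum>i\<in>{0<..<a}.
      case (\<alpha>, \<beta>) of (x # xs, y # ys) \<Rightarrow> if x = i \<and> y = a - i then count (cop \<gamma>) (xs, ys) else 0 | _ \<Rightarrow> 0)"
    by (simp add: count_image_mset_Cons_both)
  also have "\<dots> = (case (\<alpha>, \<beta>) of (x # xs, y # ys) \<Rightarrow> if x + y = a then count (cop \<gamma>) (xs, ys) else 0 | _ \<Rightarrow> 0)"
    using \<alpha> \<beta> by (cases \<alpha>; cases \<beta>) (simp_all add: sum_split_point_unique)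
  finally have middle: "(\<Sum>i\<in>{0<..<a}. ?c i) = \<dots>" .
  have "{0..a} = insert a (insert 0 {0<..<a})"
    using a by auto
  then have "count (cop (a # \<gamma>)) (\<alpha>, \<beta>) = ?c a + ?c 0 + (\<Sum>i\<in>{0<..<a}. ?c i)"
    using a by (simp add: cop_Cons_eq_sum count_sum add.assoc del: cop.simps)
  then show ?thesis
    by (simp only: ends middle)
qed

theorem count_cop_eq_count_qsh:
  assumes "is_comp \<gamma>" "is_comp \<alpha>" "is_comp \<beta>"
  shows "count (cop \<gamma>) (\<alpha>, \<beta>) = count (qsh \<alpha> \<beta>) \<gamma>"
  using assms
proof (induct \<gamma> arbitrary: \<alpha> \<beta>)
  case Nil
  then show ?case by (simp add: count_qsh_Nil)
next
  case (Cons a \<gamma>)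
  then have "0 < a" "is_comp \<gamma>" by simp_all
  with Cons show ?case
    by (cases \<alpha>; cases \<beta>) (simp_all add: count_cop_Cons count_qsh_Cons del: cop.simps qsh.simps qsh_Nil_right)
qed

section \<open>The quasi-shuffle algebra \<open>QSymm\<close>\<close>

lemma qs_mult_eq_lin_ext: "qs_mult f g = lin_ext (\<lambda>\<alpha>. lin_ext (\<lambda>\<beta>. mset_fun (qsh \<alpha> \<beta>)) g) f"
  by (auto simp: qs_mult_def lin_ext_def mset_fun_def fun_eq_iff sum_distrib_left mult.assoc)

lemma qs_mult_delta: "qs_mult (delta \<alpha>) (delta \<beta>) = mset_fun (qsh \<alpha> \<beta>)"
  by (simp add: qs_mult_eq_lin_ext)

lemma qs_mult_one_right: "fin_supp f \<Longrightarrow> qs_mult f one_z = f"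
  by (simp add: qs_mult_eq_lin_ext one_z_eq_delta mset_fun_single lin_ext_delta_id)

lemma mset_fun_qsh_in_zcomp: "is_comp \<alpha> \<Longrightarrow> is_comp \<beta> \<Longrightarrow> mset_fun (qsh \<alpha> \<beta>) \<in> zcomp"
  using is_comp_qsh by (auto simp: zcomp_iff)

lemma qs_mult_in_zcomp:
  assumes u: "u \<in> zcomp" and v: "v \<in> zcomp"
  shows "qs_mult u v \<in> zcomp"
  unfolding qs_mult_eq_lin_ext
proof (rule lin_ext_in_zcomp)
  fix \<alpha> assume "\<alpha> \<in> supp u"
  then have "is_comp \<alpha>" using u by (simp add: zcomp_iff)
  show "lin_ext (\<lambda>\<beta>. mset_fun (qsh \<alpha> \<beta>)) v \<in> zcomp"
  proof (rule lin_ext_in_zcomp)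
    fix \<beta> assume "\<beta> \<in> supp v"
    then have "is_comp \<beta>" using v by (simp add: zcomp_iff)
    with \<open>is_comp \<alpha>\<close> show "mset_fun (qsh \<alpha> \<beta>) \<in> zcomp"
      by (rule mset_fun_qsh_in_zcomp)
  qed (use v in \<open>simp add: zcomp_fin_supp\<close>)
qed (use u in \<open>simp add: zcomp_fin_supp\<close>)

lemma homogeneous_eq_0: "homogeneous w f \<Longrightarrow> sum_list \<gamma> \<noteq> w \<Longrightarrow> f \<gamma> = 0"
  by (auto simp: homogeneous_def supp_def)

lemma homogeneous_one_z: "homogeneous 0 one_z"
  by (simp add: homogeneous_def one_z_eq_delta)

lemma homogeneous_qs_mult:
  assumes "homogeneous a u" "homogeneous b v"
  shows "homogeneous (a + b) (qs_mult u v)"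
  unfolding homogeneous_def
proof
  fix \<gamma> assume "\<gamma> \<in> supp (qs_mult u v)"
  then obtain \<alpha> where "\<alpha> \<in> supp u" "\<gamma> \<in> supp (lin_ext (\<lambda>\<beta>. mset_fun (qsh \<alpha> \<beta>)) v)"
    unfolding qs_mult_eq_lin_ext by (auto dest: subsetD[OF supp_lin_ext])
  moreover from this(2) obtain \<beta> where "\<beta> \<in> supp v" "\<gamma> \<in># qsh \<alpha> \<beta>"
    by (auto dest: subsetD[OF supp_lin_ext])
  ultimately show "sum_list \<gamma> = a + b"
    using assms by (simp add: homogeneous_def sum_list_qsh)
qed

lemma qs_prod_list_in_zcomp: "set xs \<subseteq> zcomp \<Longrightarrow> qs_prod_list xs \<in> zcomp"
  by (induct xs) (auto simp: qs_prod_list_def intro: qs_mult_in_zcomp)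

lemma homogeneous_qs_prod_list:
  "(\<And>x. x \<in> set xs \<Longrightarrow> homogeneous (w x) x) \<Longrightarrow> homogeneous (sum_list (map w xs)) (qs_prod_list xs)"
  by (induct xs) (auto simp: qs_prod_list_def homogeneous_one_z intro: homogeneous_qs_mult)

lemma qs_monom_eq_prod_list:
  obtains xs where "mset xs = m" "qs_monom m = qs_prod_list xs"
  using someI_ex[OF ex_mset, of m] by (simp add: qs_monom_def)

lemma qs_monom_in_zcomp: "set_mset m \<subseteq> zcomp \<Longrightarrow> qs_monom m \<in> zcomp"
  by (metis qs_monom_eq_prod_list qs_prod_list_in_zcomp set_mset_mset)

lemma homogeneous_qs_monom:
  assumes "\<And>x. x \<in># m \<Longrightarrow> homogeneous (w x) x"
  shows "homogeneous (\<Sum>\<^sub># (image_mset w m)) (qs_monom m)"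
proof -
  obtain xs where "mset xs = m" "qs_monom m = qs_prod_list xs"
    by (rule qs_monom_eq_prod_list)
  then show ?thesis
    using homogeneous_qs_prod_list[of xs w] assms by (auto simp flip: sum_mset_sum_list)
qed

lemma qs_ring_hom_additive: "qs_ring_hom \<chi> \<Longrightarrow> additive_on (\<lambda>u. u \<in> zcomp) \<chi>"
  by (simp add: qs_ring_hom_def additive_on_def)

lemma qs_ring_hom_sum:
  "qs_ring_hom \<chi> \<Longrightarrow> (\<And>i. i \<in> I \<Longrightarrow> F i \<in> zcomp) \<Longrightarrow> \<chi> (sum F I) = (\<Sum>i\<in>I. \<chi> (F i))"
  by (rule additive_on_sum[OF int_submodule_zcomp qs_ring_hom_additive])

lemma scal_in_zcomp: "u \<in> zcomp \<Longrightarrow> scal c u \<in> zcomp"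
  using zscale_in_zcomp by (simp add: scal_def zscale_def)

lemma qs_ring_hom_scal: "qs_ring_hom \<chi> \<Longrightarrow> u \<in> zcomp \<Longrightarrow> \<chi> (scal c u) = c * \<chi> u"
  using additive_on_zscale[OF int_submodule_zcomp qs_ring_hom_additive]
  by (simp add: scal_def zscale_def[abs_def])

lemma qs_ring_hom_eq_sum:
  assumes "qs_ring_hom \<chi>" "u \<in> zcomp"
  shows "\<chi> u = (\<Sum>\<gamma>\<in>supp u. u \<gamma> * \<chi> (delta \<gamma>))"
  using additive_on_lin_ext_int[OF int_submodule_zcomp qs_ring_hom_additive[OF assms(1)], of u delta] assms(2)
  by (simp add: zcomp_iff lin_ext_delta_id)

lemma qs_ring_hom_prod_list:
  "qs_ring_hom \<chi> \<Longrightarrow> set xs \<subseteq> zcomp \<Longrightarrow> \<chi> (qs_prod_list xs) = prod_list (map \<chi> xs)"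
  by (induct xs) (auto simp: qs_prod_list_def qs_ring_hom_def qs_prod_list_in_zcomp[unfolded qs_prod_list_def])

lemma qs_ring_hom_qs_monom:
  assumes "qs_ring_hom \<chi>" "set_mset m \<subseteq> zcomp"
  shows "\<chi> (qs_monom m) = \<Prod>\<^sub># (image_mset \<chi> m)"
proof -
  obtain xs where "mset xs = m" "qs_monom m = qs_prod_list xs"
    by (rule qs_monom_eq_prod_list)
  then show ?thesis
    using assms by (auto simp: qs_ring_hom_prod_list simp flip: prod_mset_prod_list)
qed

lemma qs_ring_hom_qsh:
  assumes \<chi>: "qs_ring_hom \<chi>" and "is_comp \<alpha>" "is_comp \<beta>"
  shows "(\<Sum>\<gamma>\<in>set_mset (qsh \<alpha> \<beta>). int (count (qsh \<alpha> \<beta>) \<gamma>) * \<chi> (delta \<gamma>)) = \<chi> (delta \<alpha>) * \<chi> (delta \<beta>)"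
proof -
  have "(\<Sum>\<gamma>\<in>set_mset (qsh \<alpha> \<beta>). int (count (qsh \<alpha> \<beta>) \<gamma>) * \<chi> (delta \<gamma>)) = \<chi> (mset_fun (qsh \<alpha> \<beta>))"
    using qs_ring_hom_eq_sum[OF \<chi> mset_fun_qsh_in_zcomp[OF assms(2,3)]]
    unfolding supp_mset_fun by (simp add: mset_fun_def)
  also have "\<dots> = \<chi> (delta \<alpha>) * \<chi> (delta \<beta>)"
    using assms by (simp add: qs_ring_hom_def flip: qs_mult_delta)
  finally show ?thesis .
qed

section \<open>Free polynomial bases\<close>

text \<open>Arbitrary on the zero function, which is homogeneous of every weight.\<close>

definition weight :: "(nat list \<Rightarrow> int) \<Rightarrow> nat" where
  "weight x = (SOME w. homogeneous w x)"

lemma free_poly_basis_zcomp: "free_poly_basis \<Phi> \<Longrightarrow> \<Phi> \<subseteq> zcomp"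
  by (simp add: free_poly_basis_def)

lemma free_poly_basis_homogeneous:
  assumes "free_poly_basis \<Phi>" "x \<in> \<Phi>"
  shows "homogeneous (weight x) x"
proof -
  have "\<exists>w. homogeneous w x"
    using assms by (simp add: free_poly_basis_def)
  then show ?thesis
    unfolding weight_def by (rule someI_ex)
qed

lemma free_poly_basis_independent:
  assumes "free_poly_basis \<Phi>" "finite M" "\<forall>m\<in>M. set_mset m \<subseteq> \<Phi>"
    and "(\<Sum>m\<in>M. scal (c m) (qs_monom m)) = (\<lambda>_. 0)" and "m \<in> M"
  shows "c m = 0"
proof -
  have "\<forall>M c. finite M \<and> (\<forall>m\<in>M. set_mset m \<subseteq> \<Phi>) \<and>
      (\<Sum>m\<in>M. scal (c m) (qs_monom m)) = (\<lambda>_. 0) \<longrightarrow> (\<forall>m\<in>M. c m = 0)"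
    using assms(1) unfolding free_poly_basis_def by (rule conjunct1[OF conjunct2[OF conjunct2]])
  then show ?thesis
    using assms(2-) by blast
qed

lemma free_poly_basis_spanning:
  assumes "free_poly_basis \<Phi>" "f \<in> zcomp"
  obtains M c where "finite M" "\<forall>m\<in>M. set_mset m \<subseteq> \<Phi>" "f = (\<Sum>m\<in>M. scal (c m) (qs_monom m))"
proof -
  have "\<forall>f\<in>zcomp. \<exists>M c. finite M \<and> (\<forall>m\<in>M. set_mset m \<subseteq> \<Phi>) \<and> f = (\<Sum>m\<in>M. scal (c m) (qs_monom m))"
    using assms(1) unfolding free_poly_basis_def by (rule conjunct2[OF conjunct2[OF conjunct2]])
  then show ?thesis
    using assms(2) that by blast
qed

lemma free_poly_basis_monom_in_zcomp:
  "free_poly_basis \<Phi> \<Longrightarrow> set_mset m \<subseteq> \<Phi> \<Longrightarrow> qs_monom m \<in> zcomp"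
  by (meson free_poly_basis_zcomp order_trans qs_monom_in_zcomp)

lemma free_poly_basis_homogeneous_monom:
  assumes "free_poly_basis \<Phi>" "set_mset m \<subseteq> \<Phi>"
  shows "homogeneous (\<Sum>\<^sub># (image_mset weight m)) (qs_monom m)"
  using assms by (intro homogeneous_qs_monom free_poly_basis_homogeneous[OF assms(1)]) auto

lemma free_poly_basis_coeff_eq_0_if_weight_ne:
  assumes \<Phi>: "free_poly_basis \<Phi>" and M: "finite M" "\<forall>m\<in>M. set_mset m \<subseteq> \<Phi>"
    and h: "homogeneous w (\<Sum>m\<in>M. scal (c m) (qs_monom m))"
    and m0: "m0 \<in> M" "\<Sum>\<^sub># (image_mset weight m0) \<noteq> w"
  shows "c m0 = 0"
proof -
  let ?W = "\<lambda>m. \<Sum>\<^sub># (image_mset weight m)"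
  let ?M' = "{m\<in>M. ?W m = ?W m0}"
  have monom_0: "qs_monom m \<gamma> = 0" if "m \<in> M" "?W m \<noteq> sum_list \<gamma>" for m \<gamma>
    using that M by (intro homogeneous_eq_0[OF free_poly_basis_homogeneous_monom[OF \<Phi>]]) auto
  have "(\<Sum>m\<in>?M'. scal (c m) (qs_monom m)) \<gamma> = 0" for \<gamma>
  proof -
    have "(\<Sum>m\<in>?M'. scal (c m) (qs_monom m)) \<gamma> = (\<Sum>m\<in>?M'. c m * qs_monom m \<gamma>)"
      by (simp add: sum_fun_apply scal_def)
    also have "\<dots> = (\<Sum>m\<in>M. if ?W m = ?W m0 then c m * qs_monom m \<gamma> else 0)"
      using M by (simp add: sum.inter_filter)
    also have "\<dots> = (\<Sum>m\<in>M. if sum_list \<gamma> = ?W m0 then c m * qs_monom m \<gamma> else 0)"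
      using monom_0 by (intro sum.cong) auto
    also have "\<dots> = (if sum_list \<gamma> = ?W m0 then (\<Sum>m\<in>M. scal (c m) (qs_monom m)) \<gamma> else 0)"
      by (simp add: sum_fun_apply scal_def)
    also have "\<dots> = 0"
      using h m0 by (auto intro: homogeneous_eq_0)
    finally show ?thesis .
  qed
  then show ?thesis
    using M m0 by (intro free_poly_basis_independent[OF \<Phi>, of ?M']) (auto simp: fun_eq_iff)
qed

text \<open>An element of weight 0 is a multiple of \<open>1\<close>, so it would be algebraically dependent.\<close>

lemma free_poly_basis_not_homogeneous_0:
  assumes \<Phi>: "free_poly_basis \<Phi>" and \<phi>: "\<phi> \<in> \<Phi>"
  shows "\<not> homogeneous 0 \<phi>"
proof
  assume h: "homogeneous 0 \<phi>"
  have "\<phi> \<in> zcomp" using \<Phi> \<phi> free_poly_basis_zcomp by blast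
  then have "\<phi> \<gamma> = 0" if "\<gamma> \<noteq> []" for \<gamma>
    using that homogeneous_eq_0[OF h, of \<gamma>] is_comp_weight_0[of \<gamma>] not_in_supp[of \<gamma> \<phi>]
    by (auto simp: zcomp_iff)
  then obtain c0 where \<phi>_eq: "\<phi> = scal c0 one_z"
    by (auto simp: scal_def one_z_def bas_def fun_eq_iff)
  have "qs_monom {#} = one_z"
    by (rule qs_monom_eq_prod_list[of "{#}"]) (simp add: qs_prod_list_def)
  moreover have "qs_monom {#\<phi>#} = \<phi>"
    by (rule qs_monom_eq_prod_list[of "{#\<phi>#}"])
      (use \<open>\<phi> \<in> zcomp\<close> in \<open>simp add: qs_prod_list_def qs_mult_one_right zcomp_fin_supp\<close>)
  ultimately have dependence:
    "(\<Sum>m\<in>{{#}, {#\<phi>#}}. scal (if m = {#} then c0 else -1) (qs_monom m)) = (\<lambda>_. 0)"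
    by (simp add: \<phi>_eq scal_def fun_eq_iff)
  have "(if {#\<phi>#} = {#} then c0 else -1) = (0::int)"
    by (rule free_poly_basis_independent[OF \<Phi> _ _ dependence]) (use \<phi> in auto)
  then show False by simp
qed

lemma free_poly_basis_weight:
  assumes \<Phi>: "free_poly_basis \<Phi>" and \<phi>: "\<phi> \<in> \<Phi>" "homogeneous n \<phi>"
  shows "weight \<phi> = n"
proof -
  have "\<phi> \<noteq> 0"
    using free_poly_basis_not_homogeneous_0[OF \<Phi> \<phi>(1)] by (auto simp: homogeneous_def)
  then obtain \<gamma> where "\<phi> \<gamma> \<noteq> 0" by (auto simp: fun_eq_iff)
  then show ?thesis
    using homogeneous_eq_0[OF free_poly_basis_homogeneous[OF \<Phi> \<phi>(1)]] homogeneous_eq_0[OF \<phi>(2)] by metis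
qed

lemma character_vanishes_off_multiples:
  assumes \<Phi>: "free_poly_basis \<Phi>" and \<phi>: "\<phi> \<in> \<Phi>" "homogeneous n \<phi>"
    and \<chi>: "qs_ring_hom \<chi>" "\<forall>\<phi>'\<in>\<Phi> - {\<phi>}. \<chi> \<phi>' = 0"
    and \<alpha>: "is_comp \<alpha>" "\<not> n dvd sum_list \<alpha>"
  shows "\<chi> (delta \<alpha>) = 0"
proof -
  obtain M c where M: "finite M" "\<forall>m\<in>M. set_mset m \<subseteq> \<Phi>"
    and expand: "delta \<alpha> = (\<Sum>m\<in>M. scal (c m) (qs_monom m))"
    using free_poly_basis_spanning[OF \<Phi>, of "delta \<alpha>"] \<alpha> by auto
  have monom: "qs_monom m \<in> zcomp" "set_mset m \<subseteq> zcomp" if "m \<in> M" for m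
    using that M free_poly_basis_monom_in_zcomp[OF \<Phi>] free_poly_basis_zcomp[OF \<Phi>] by auto
  have "\<chi> (delta \<alpha>) = (\<Sum>m\<in>M. c m * \<Prod>\<^sub># (image_mset \<chi> m))"
    unfolding expand using monom
    by (simp add: qs_ring_hom_sum[OF \<chi>(1)] qs_ring_hom_scal[OF \<chi>(1)] qs_ring_hom_qs_monom[OF \<chi>(1)]
        scal_in_zcomp)
  also have "\<dots> = 0"
  proof (rule sum.neutral, rule ballI)
    fix m assume m: "m \<in> M"
    show "c m * \<Prod>\<^sub># (image_mset \<chi> m) = 0"
    proof (cases "set_mset m \<subseteq> {\<phi>}")
      case True
      then have "image_mset weight m = image_mset (\<lambda>_. n) m"
        using free_poly_basis_weight[OF \<Phi> \<phi>] by (intro image_mset_cong) auto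
      then have "\<Sum>\<^sub># (image_mset weight m) \<noteq> sum_list \<alpha>"
        using \<alpha>(2) by (metis dvd_triv_right sum_mset_constant)
      moreover have "homogeneous (sum_list \<alpha>) (\<Sum>m\<in>M. scal (c m) (qs_monom m))"
        by (simp add: homogeneous_def flip: expand)
      ultimately have "c m = 0"
        using free_poly_basis_coeff_eq_0_if_weight_ne[OF \<Phi> M] m by blast
      then show ?thesis by simp
    next
      case False
      then obtain x where "x \<in># m" "x \<noteq> \<phi>" by auto
      then have "\<chi> x = 0" using \<chi>(2) M m by auto
      with \<open>x \<in># m\<close> show ?thesis by (auto simp: prod_mset_zero_iff)
    qed
  qed
  finally show ?thesis .
qed

lemma dseq_apply: "dseq \<chi> m \<alpha> = (if is_comp \<alpha> \<and> sum_list \<alpha> = m then \<chi> (delta \<alpha>) else 0)"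
  by (simp add: dseq_def bas_eq_delta)

lemma supp_dseq: "supp (dseq \<chi> m) \<subseteq> {\<gamma>. is_comp \<gamma> \<and> sum_list \<gamma> = m}"
  by (auto simp: supp_def dseq_apply split: if_splits)

lemma dseq_in_zcomp: "dseq \<chi> m \<in> zcomp"
  using supp_dseq finite_subset[OF supp_dseq finite_compositions] by (fastforce simp: zcomp_iff fin_supp_def)

lemma homogeneous_dseq: "homogeneous m (dseq \<chi> m)"
  using supp_dseq by (fastforce simp: homogeneous_def)

lemma dseq_0:
  assumes "qs_ring_hom \<chi>"
  shows "dseq \<chi> 0 = one_z"
proof
  fix \<alpha>
  have "is_comp \<alpha> \<and> sum_list \<alpha> = 0 \<longleftrightarrow> \<alpha> = []"
    using is_comp_weight_0 by auto
  then show "dseq \<chi> 0 \<alpha> = one_z \<alpha>"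
    using assms by (simp add: dseq_apply qs_ring_hom_def one_z_eq_delta) (simp add: delta_def)
qed

lemma counit_dseq: "0 < m \<Longrightarrow> counit (dseq \<chi> m) = 0"
  by (simp add: counit_def dseq_apply)

text \<open>Via the duality, \<open>\<Delta> d\<^sub>m\<close> is the restriction to weight \<open>m\<close> of
  \<open>\<chi>(M\<^sub>\<alpha> M\<^sub>\<beta>) = \<chi>(M\<^sub>\<alpha>) \<chi>(M\<^sub>\<beta>)\<close>.\<close>

lemma coprod_dseq_apply:
  assumes \<chi>: "qs_ring_hom \<chi>"
  shows "coprod (dseq \<chi> m) (\<alpha>, \<beta>) =
    (if is_comp \<alpha> \<and> is_comp \<beta> \<and> sum_list \<alpha> + sum_list \<beta> = m then \<chi> (delta \<alpha>) * \<chi> (delta \<beta>) else 0)"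
proof -
  let ?C = "{\<gamma>. is_comp \<gamma> \<and> sum_list \<gamma> = m}"
  have "coprod (dseq \<chi> m) (\<alpha>, \<beta>) = (\<Sum>\<gamma>\<in>?C. int (count (cop \<gamma>) (\<alpha>, \<beta>)) * \<chi> (delta \<gamma>))"
    by (simp add: coprod_eq_lin_ext lin_ext_eq_sum_superset[OF finite_compositions supp_dseq]
        cop_fun_def mset_fun_def dseq_apply mult.commute)
  also have "\<dots> = (if is_comp \<alpha> \<and> is_comp \<beta> \<and> sum_list \<alpha> + sum_list \<beta> = m
      then (\<Sum>\<gamma>\<in>set_mset (qsh \<alpha> \<beta>). int (count (qsh \<alpha> \<beta>) \<gamma>) * \<chi> (delta \<gamma>)) else 0)"
  proof (cases "is_comp \<alpha> \<and> is_comp \<beta>")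
    case True
    have "set_mset (qsh \<alpha> \<beta>) \<subseteq> ?C" if "sum_list \<alpha> + sum_list \<beta> = m"
      using True that is_comp_qsh sum_list_qsh by blast
    moreover have "count (qsh \<alpha> \<beta>) \<gamma> = 0" if "sum_list \<alpha> + sum_list \<beta> \<noteq> m" "\<gamma> \<in> ?C" for \<gamma>
      using that sum_list_qsh by (metis (mono_tags) count_eq_zero_iff mem_Collect_eq)
    ultimately show ?thesis
      using True finite_compositions
      by (auto simp: count_cop_eq_count_qsh not_in_iff intro!: sum.mono_neutral_right)
  next
    case False
    then have "count (cop \<gamma>) (\<alpha>, \<beta>) = 0" for \<gamma>
      using is_comp_cop by (metis count_eq_zero_iff fst_conv snd_conv)
    then show ?thesis using False by auto
  qed
  also have "\<dots> = (if is_comp \<alpha> \<and> is_comp \<beta> \<and> sum_list \<alpha> + sum_list \<beta> = m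
      then \<chi> (delta \<alpha>) * \<chi> (delta \<beta>) else 0)"
    using qs_ring_hom_qsh[OF \<chi>] by simp
  finally show ?thesis .
qed

lemma coprod_dseq:
  assumes "qs_ring_hom \<chi>"
  shows "coprod (dseq \<chi> m) = (\<Sum>i\<in>{0..m}. tens (dseq \<chi> i) (dseq \<chi> (m - i)))"
proof (rule ext, clarify)
  fix \<alpha> \<beta>
  have "(\<Sum>i\<in>{0..m}. tens (dseq \<chi> i) (dseq \<chi> (m - i))) (\<alpha>, \<beta>)
      = (\<Sum>i\<in>{0..m}. if i = sum_list \<alpha> then dseq \<chi> i \<alpha> * dseq \<chi> (m - i) \<beta> else 0)"
    unfolding sum_fun_apply tens_apply by (intro sum.cong) (auto simp: dseq_apply)
  also have "\<dots> = (if sum_list \<alpha> \<le> m then dseq \<chi> (sum_list \<alpha>) \<alpha> * dseq \<chi> (m - sum_list \<alpha>) \<beta> else 0)"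
    by (simp only: sum.delta[OF finite_atLeastAtMost] atLeastAtMost_iff) simp
  also have "\<dots> = coprod (dseq \<chi> m) (\<alpha>, \<beta>)"
    by (auto simp: coprod_dseq_apply[OF assms] dseq_apply)
  finally show "coprod (dseq \<chi> m) (\<alpha>, \<beta>) = (\<Sum>i\<in>{0..m}. tens (dseq \<chi> i) (dseq \<chi> (m - i))) (\<alpha>, \<beta>)" ..
qed

lemma sum_atLeastAtMost_multiples:
  fixes f :: "nat \<Rightarrow> 'a::comm_monoid_add"
  assumes n: "0 < n" and f: "\<And>i. \<not> n dvd i \<Longrightarrow> f i = 0"
  shows "(\<Sum>i\<in>{0..k * n}. f i) = (\<Sum>j\<in>{0..k}. f (j * n))"
proof -
  have "(\<Sum>j\<in>{0..k}. f (j * n)) = (\<Sum>i\<in>(\<lambda>j. j * n) ` {0..k}. f i)"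
    using n by (simp add: sum.reindex inj_on_def)
  also have "\<dots> = (\<Sum>i\<in>{0..k * n}. f i)"
  proof (rule sum.mono_neutral_left)
    show "\<forall>i\<in>{0..k * n} - (\<lambda>j. j * n) ` {0..k}. f i = 0"
      using n by (auto intro!: f elim!: dvdE simp: mult.commute[of n])
  qed auto
  finally show ?thesis by simp
qed

lemma divided_power_seq_dseq:
  assumes \<chi>: "qs_ring_hom \<chi>" and n: "0 < n" and vanish: "\<And>i. \<not> n dvd i \<Longrightarrow> dseq \<chi> i = 0"
  shows "divided_power_seq (\<lambda>k. dseq \<chi> (k * n))"
proof
  fix k :: nat
  show "dseq \<chi> (k * n) \<in> zcomp" by (rule dseq_in_zcomp)
  show "0 < k \<Longrightarrow> counit (dseq \<chi> (k * n)) = 0" using n by (simp add: counit_dseq)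
  have "coprod (dseq \<chi> (k * n)) = (\<Sum>i\<in>{0..k * n}. tens (dseq \<chi> i) (dseq \<chi> (k * n - i)))"
    by (rule coprod_dseq[OF \<chi>])
  also have "\<dots> = (\<Sum>j\<in>{0..k}. tens (dseq \<chi> (j * n)) (dseq \<chi> (k * n - j * n)))"
    using n vanish by (intro sum_atLeastAtMost_multiples) simp_all
  finally show "coprod (dseq \<chi> (k * n)) = (\<Sum>i\<in>{0..k}. tens (dseq \<chi> (i * n)) (dseq \<chi> ((k - i) * n)))"
    by (simp add: diff_mult_distrib)
qed (simp add: dseq_0 \<chi>)

theorem mainTheorem7:
  fixes \<Phi> :: "(nat list \<Rightarrow> int) set" and \<phi> :: "nat list \<Rightarrow> int" and n :: nat
    and \<chi> :: "(nat list \<Rightarrow> int) \<Rightarrow> int"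
  assumes "free_poly_basis \<Phi>"
    and "\<phi> \<in> \<Phi>" and "homogeneous n \<phi>"
    and "qs_ring_hom \<chi>" and "\<chi> \<phi> = 1" and "\<forall>\<phi>'\<in>\<Phi> - {\<phi>}. \<chi> \<phi>' = 0"
  shows "(\<forall>i. \<not> n dvd i \<longrightarrow> dseq \<chi> i = (\<lambda>_. 0))
    \<and> dseq \<chi> 0 = one_z
    \<and> (\<forall>k. dseq \<chi> (k * n) \<in> zcomp \<and> homogeneous (k * n) (dseq \<chi> (k * n))
          \<and> coprod (dseq \<chi> (k * n)) = (\<Sum>i\<in>{0..k}. tens (dseq \<chi> (i * n)) (dseq \<chi> ((k - i) * n))))
    \<and> (\<exists>f. ns_hopf_endo f \<and> (\<forall>k\<ge>1. f (bas [k]) = dseq \<chi> (k * n))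
         \<and> (\<forall>g. ns_hopf_endo g \<and> (\<forall>k\<ge>1. g (bas [k]) = dseq \<chi> (k * n))
               \<longrightarrow> (\<forall>x\<in>zcomp. g x = f x)))"
proof -
  have n: "0 < n"
    using free_poly_basis_not_homogeneous_0[OF assms(1,2)] assms(3) by (cases n) auto
  have vanish: "dseq \<chi> i = 0" if "\<not> n dvd i" for i
    using that character_vanishes_off_multiples[OF assms(1-4,6)] by (auto simp: dseq_apply fun_eq_iff)
  interpret divided_power_seq "\<lambda>k. dseq \<chi> (k * n)"
    by (rule divided_power_seq_dseq[OF assms(4) n vanish])
  have unique: "g x = hopf_ext x"
    if "ns_hopf_endo g" "\<forall>k\<ge>1. g (bas [k]) = dseq \<chi> (k * n)" "x \<in> zcomp" for g x
    using ns_hopf_endo_eqI[OF that(1) ns_hopf_endo_hopf_ext _ that(3)] that(2) hopf_ext_bas_single by simp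
  show ?thesis
  proof (intro conjI allI impI exI[of _ hopf_ext] ballI)
    show "dseq \<chi> i = (\<lambda>_. 0)" if "\<not> n dvd i" for i
      using vanish[OF that] by (simp add: zero_fun_def)
  next
    fix g x assume "ns_hopf_endo g \<and> (\<forall>k\<ge>1. g (bas [k]) = dseq \<chi> (k * n))" "x \<in> zcomp"
    then show "g x = hopf_ext x" using unique by blast
  qed (simp_all add: dseq_0 assms(4) dseq_in_zcomp homogeneous_dseq coprod_D ns_hopf_endo_hopf_ext
      hopf_ext_bas_single)
qed

end
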